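(* Let $n\ge3$ and $(x,y)\in\mathbb{C}^n\times\mathbb{C}^{n-1}$. The following are equivalent: (i) $(x,y)\in\mathbb{G}_{1,n}$; (ii) for each $\xi\in\overline{\mathbb{D}}$, the point $(\widetilde{x}(\xi),\widetilde{y}(\xi))\in\mathbb{C}^{n-1}\times\mathbb{C}^{n-2}$ belongs to $\mathbb{G}_{1,n-1}$, where \[ \widetilde{x}_j(\xi):=\frac{(n-j)x_j-j\xi x_{j+1}}{(n-1)-\xi y_1},\ j=1,\dots,n-1,\qquad \widetilde{y}_j(\xi):=\frac{(n-1-j)y_j-(j+1)\xi y_{j+1}}{(n-1)-\xi y_1},\ j=1,\dots,n-2 \] (part of the assertion (ii) being that the denominators $(n-1)-\xi y_1$ are nonzero for $\xi\in\overline{\mathbb{D}}$).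
   Context: $\mathbb{D}$ is the open unit disc. For $N\ge2$ and $(x,y)\in\mathbb{C}^N\times\mathbb{C}^{N-1}$: $P_N(z;x):=\sum_{j=0}^{N-1}(-1)^jx_{j+1}z^j$, $Q_N(z;y):=1+\sum_{j=1}^{N-1}(-1)^jy_jz^j$, and $\mathbb{G}_{1,N}:=\{(x,y): \text{the zero set of }(z,w)\mapsto Q_N(z;y)-wP_N(z;x)\text{ in }\mathbb{C}^2\text{ does not meet }\overline{\mathbb{D}}^2\}$. *)

theory Defs
  imports "HOL-Analysis.Analysis"
begin

text \<open>Points of C^N x C^(N-1) are represented by coordinate functions
  x, y :: nat => complex, with x_1..x_N and y_1..y_(N-1) the relevant entries
  (other entries are ignored by all definitions below).\<close>

definition PN :: "nat \<Rightarrow> (nat \<Rightarrow> complex) \<Rightarrow> complex \<Rightarrow> complex" where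
  "PN N x z = (\<Sum>j<N. (-1)^j * x (j+1) * z^j)"

definition QN :: "nat \<Rightarrow> (nat \<Rightarrow> complex) \<Rightarrow> complex \<Rightarrow> complex" where
  "QN N y z = 1 + (\<Sum>j\<in>{1..N-1}. (-1)^j * y j * z^j)"

definition G1 :: "nat \<Rightarrow> ((nat \<Rightarrow> complex) \<times> (nat \<Rightarrow> complex)) set" where
  "G1 N = {(x, y). \<forall>z w. cmod z \<le> 1 \<and> cmod w \<le> 1 \<longrightarrow> QN N y z - w * PN N x z \<noteq> 0}"

definition xtil :: "nat \<Rightarrow> (nat \<Rightarrow> complex) \<Rightarrow> (nat \<Rightarrow> complex) \<Rightarrow> complex \<Rightarrow> nat \<Rightarrow> complex" where
  "xtil n x y \<xi> j = ((of_nat n - of_nat j) * x j - of_nat j * \<xi> * x (j+1))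
                      / ((of_nat n - 1) - \<xi> * y 1)"

definition ytil :: "nat \<Rightarrow> (nat \<Rightarrow> complex) \<Rightarrow> complex \<Rightarrow> nat \<Rightarrow> complex" where
  "ytil n y \<xi> j = ((of_nat n - 1 - of_nat j) * y j - (of_nat j + 1) * \<xi> * y (j+1))
                      / ((of_nat n - 1) - \<xi> * y 1)"

end

theory Submission
  imports Defs "HOL-Computational_Algebra.Fundamental_Theorem_Algebra"
begin

(* For fixed w the function F_w(z) = Q_n(z;y) - w P_n(z;x) is a polynomial of
   degree at most n-1, and a computation on coefficients shows that its polar derivative
     (n-1) F_w(z) + (xi - z) F_w'(z)
   equals ((n-1) - xi y_1) times the reduced function Q_{n-1}(z;ytil(xi)) - w P_{n-1}(z;xtil(xi)).
   If (x,y) lies in G_{1,n}, every F_w with |w| <= 1 has all its zeros outside the closed disc,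
   so by Laguerre's theorem its polar derivative has no zeros in the closed disc either; this
   gives both the nonvanishing of the denominator (take z = w = 0) and the membership of the
   reduced point in G_{1,n-1}.  Conversely, at xi = z the polar derivative is (n-1) F_w(z), so a
   zero of F_w in the closed bidisc produces a zero of the reduced function. *)

definition polar_derivative :: "nat \<Rightarrow> complex poly \<Rightarrow> complex \<Rightarrow> complex \<Rightarrow> complex" where
  "polar_derivative d p \<xi> z = of_nat d * poly p z + (\<xi> - z) * poly (pderiv p) z"

(* A region containing 0 and, for a \<noteq> z, containing 1/(z - a) exactly when a lies outside the
   closed unit disc; for |z| <= 1 it is convex. *)
definition laguerre_region :: "complex \<Rightarrow> complex set" where
  "laguerre_region z = {u. (1 - (cmod z)^2) * (cmod u)^2 + 2 * Re (z * u) < 1}"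

lemma zero_in_laguerre_region: "0 \<in> laguerre_region z"
  unfolding laguerre_region_def by simp

lemma inverse_in_laguerre_region_iff:
  assumes "z \<noteq> a"
  shows "1 / (z - a) \<in> laguerre_region z \<longleftrightarrow> 1 < cmod a"
proof -
  define t where "t = z - a"
  have t: "(cmod t)^2 > 0" using assms by (simp add: t_def)
  have eq: "(1 - (cmod z)^2) * (cmod (1 / t))^2 + 2 * Re (z * (1 / t))
        = ((1 - (cmod z)^2) + 2 * (Re z * Re t + Im z * Im t)) / (cmod t)^2"
    using t by (simp add: norm_divide power_divide Re_divide' field_simps)
  have "1 / t \<in> laguerre_region z \<longleftrightarrow>
        (1 - (cmod z)^2) + 2 * (Re z * Re t + Im z * Im t) < (cmod t)^2"
    unfolding laguerre_region_def mem_Collect_eq eq using t by (simp add: divide_less_eq)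
  also have "\<dots> \<longleftrightarrow> 1 < (cmod a)^2"
    unfolding t_def cmod_power2 by (simp add: power2_eq_square algebra_simps)
  also have "\<dots> \<longleftrightarrow> 1 < cmod a"
    using abs_square_le_1[of "cmod a"] by auto
  finally show ?thesis unfolding t_def .
qed

(* Convexity holds because u -> (1 - |z|^2) |u|^2 + 2 Re (z u) is a convex function when |z| <= 1. *)
lemma convex_laguerre_region:
  assumes "cmod z \<le> 1"
  shows "convex (laguerre_region z)"
proof (rule convexI)
  fix u v :: complex and s t :: real
  assume u: "u \<in> laguerre_region z" and v: "v \<in> laguerre_region z"
    and st: "0 \<le> s" "0 \<le> t" "s + t = 1"
  define A where "A = 1 - (cmod z)^2"
  have A: "0 \<le> A" using power_le_one[OF norm_ge_zero assms, of 2] by (simp add: A_def)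
  have "(cmod (s *\<^sub>R u + t *\<^sub>R v))^2 + s * t * (cmod (u - v))^2 = s * (cmod u)^2 + t * (cmod v)^2"
  proof -
    have "t = 1 - s" using st(3) by simp
    show ?thesis unfolding cmod_power2 \<open>t = 1 - s\<close> by (simp add: power2_eq_square algebra_simps)
  qed
  then have sq: "(cmod (s *\<^sub>R u + t *\<^sub>R v))^2 \<le> s * (cmod u)^2 + t * (cmod v)^2"
    using st by (smt (verit) mult_nonneg_nonneg zero_le_power2)
  have lin: "Re (z * (s *\<^sub>R u + t *\<^sub>R v)) = s * Re (z * u) + t * Re (z * v)"
    by (simp add: scaleR_conv_of_real algebra_simps)
  have "A * (cmod (s *\<^sub>R u + t *\<^sub>R v))^2 + 2 * Re (z * (s *\<^sub>R u + t *\<^sub>R v))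
        \<le> s * (A * (cmod u)^2 + 2 * Re (z * u)) + t * (A * (cmod v)^2 + 2 * Re (z * v))"
    using mult_left_mono[OF sq A] unfolding lin by (simp add: algebra_simps)
  also have "\<dots> < 1"
    using u v unfolding laguerre_region_def A_def mem_Collect_eq by (rule convex_bound_lt[OF _ _ st])
  finally show "s *\<^sub>R u + t *\<^sub>R v \<in> laguerre_region z"
    unfolding laguerre_region_def A_def by simp
qed

(* If all zeros of p lie outside the closed disc, p'(z)/(d p(z)) is an average of the values
   1/(z - a) over the zeros a and of d - deg p zeros, hence lies in the convex region. *)
lemma logarithmic_derivative_in_laguerre_region:
  fixes p :: "complex poly"
  assumes "p \<noteq> 0" and "\<forall>a. poly p a = 0 \<longrightarrow> 1 < cmod a" and "cmod z \<le> 1"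
    and "degree p \<le> d"
  shows "poly (pderiv p) z / (of_nat d * poly p z) \<in> laguerre_region z"
  using assms
proof (induction "degree p" arbitrary: p d)
  case 0
  then have "pderiv p = 0" by (simp add: pderiv_eq_0_iff)
  then show ?case by (simp add: zero_in_laguerre_region)
next
  case (Suc m)
  have "\<not> constant (poly p)" using Suc.hyps(2) by (simp add: constant_degree)
  then obtain a where "poly p a = 0" using fundamental_theorem_of_algebra by blast
  then obtain q where pq: "p = [:-a, 1:] * q" by (metis dvdE poly_eq_0_iff_dvd)
  have q: "q \<noteq> 0" using Suc.prems(1) pq by auto
  have "degree p = degree [:-a, 1:] + degree q" unfolding pq using q by (intro degree_mult_eq) auto
  then have deg_q: "degree q = m" using Suc.hyps(2) by simp
  have roots_q: "\<forall>b. poly q b = 0 \<longrightarrow> 1 < cmod b" using Suc.prems(2) pq by auto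
  have a: "1 < cmod a" using Suc.prems(2) \<open>poly p a = 0\<close> by blast
  have za: "z \<noteq> a" and qz: "poly q z \<noteq> 0" using a roots_q Suc.prems(3) by auto
  have d: "1 \<le> d" using Suc.prems(4) Suc.hyps(2) by simp
  define V where "V = poly (pderiv q) z / (of_nat (d - 1) * poly q z)"
  have V: "V \<in> laguerre_region z"
    unfolding V_def using Suc.prems(4) Suc.hyps(2) deg_q
    by (intro Suc.hyps(1)[OF deg_q[symmetric] q roots_q Suc.prems(3)]) simp
  have u: "1 / (z - a) \<in> laguerre_region z"
    using inverse_in_laguerre_region_iff[OF za] a by simp
  (* Removing the root a: the logarithmic derivative splits as p'/p = q'/q + 1/(z - a). *)
  have q_part: "poly (pderiv q) z / (of_nat d * poly q z) = ((real d - 1) / real d) *\<^sub>R V"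
  proof (cases "d = 1")
    case True
    then have "pderiv q = 0" using Suc.prems(4) Suc.hyps(2) deg_q by (simp add: pderiv_eq_0_iff)
    then show ?thesis using True by (simp add: V_def)
  next
    case False
    then show ?thesis using d qz by (simp add: V_def scaleR_conv_of_real of_nat_diff field_simps)
  qed
  have p_z: "poly p z = (z - a) * poly q z"
    unfolding pq by (simp add: algebra_simps)
  have p'_z: "poly (pderiv p) z = poly q z + (z - a) * poly (pderiv q) z"
    unfolding pq pderiv_mult by (simp add: pderiv_pCons algebra_simps)
  have "poly (pderiv p) z / (of_nat d * poly p z)
        = poly (pderiv q) z / (of_nat d * poly q z) + (1 / real d) *\<^sub>R (1 / (z - a))"
    using za qz d unfolding p_z p'_z by (simp add: scaleR_conv_of_real field_simps)
  also have "\<dots> = ((real d - 1) / real d) *\<^sub>R V + (1 / real d) *\<^sub>R (1 / (z - a))"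
    unfolding q_part ..
  also have "\<dots> \<in> laguerre_region z"
    using d by (intro convexD[OF convex_laguerre_region[OF Suc.prems(3)] V u])
               (simp_all add: diff_divide_distrib)
  finally show ?case .
qed

(* Laguerre's theorem: the polar derivative of a polynomial without zeros in the closed disc has
   no zeros (z, xi) in the closed bidisc.  A zero would force 1/(z - xi) into the region, i.e. |xi| > 1. *)
lemma polar_derivative_nonzero:
  fixes p :: "complex poly"
  assumes "p \<noteq> 0" and "\<forall>a. poly p a = 0 \<longrightarrow> 1 < cmod a"
    and "cmod z \<le> 1" and "cmod \<xi> \<le> 1" and "degree p \<le> d" and "0 < d"
  shows "polar_derivative d p \<xi> z \<noteq> 0"
proof
  assume "polar_derivative d p \<xi> z = 0"
  then have vanish: "of_nat d * poly p z + (\<xi> - z) * poly (pderiv p) z = 0"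
    unfolding polar_derivative_def .
  have pz: "poly p z \<noteq> 0" using assms(2,3) by force
  then have "z \<noteq> \<xi>" using vanish assms(6) by auto
  have "poly (pderiv p) z / (of_nat d * poly p z) = 1 / (z - \<xi>)"
    using vanish pz \<open>z \<noteq> \<xi>\<close> assms(6) by (simp add: field_simps)
  then have "1 / (z - \<xi>) \<in> laguerre_region z"
    using logarithmic_derivative_in_laguerre_region[OF assms(1-3,5)] by simp
  then show False
    using inverse_in_laguerre_region_iff[OF \<open>z \<noteq> \<xi>\<close>] assms(4) by simp
qed

definition coeff_poly :: "(nat \<Rightarrow> complex) \<Rightarrow> nat \<Rightarrow> complex poly" where
  "coeff_poly c n = (\<Sum>j<n. monom (c j) j)"

lemma poly_coeff_poly: "poly (coeff_poly c n) z = (\<Sum>j<n. c j * z^j)"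
  unfolding coeff_poly_def by (simp add: poly_sum poly_monom)

lemma poly_pderiv_coeff_poly:
  "poly (pderiv (coeff_poly c n)) z = (\<Sum>j<n. of_nat j * c j * z^(j - 1))"
proof -
  have "pderiv (coeff_poly c n) = (\<Sum>j<n. monom (of_nat j * c j) (j - 1))"
    unfolding coeff_poly_def by (induction n) (simp_all add: pderiv_add pderiv_monom)
  then show ?thesis by (simp add: poly_sum poly_monom)
qed

lemma degree_coeff_poly: "degree (coeff_poly c n) \<le> n - 1"
  unfolding coeff_poly_def by (rule degree_sum_le) (auto intro: order.trans[OF degree_monom_le])

lemma polar_derivative_coeff_poly:
  "polar_derivative m (coeff_poly c (Suc m)) \<xi> z
     = (\<Sum>j<m. ((of_nat m - of_nat j) * c j + \<xi> * of_nat (j + 1) * c (j + 1)) * z^j)"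
proof -
  have shift: "(\<Sum>j<Suc m. of_nat j * c j * z^(j - 1)) = (\<Sum>j<m. of_nat (j + 1) * c (j + 1) * z^j)"
    by (subst sum.lessThan_Suc_shift) simp
  have z_times: "z * (\<Sum>j<Suc m. of_nat j * c j * z^(j - 1)) = (\<Sum>j<Suc m. of_nat j * c j * z^j)"
    unfolding sum_distrib_left by (rule sum.cong) (auto simp: power_eq_if)
  have "of_nat m * (\<Sum>j<Suc m. c j * z^j) - z * (\<Sum>j<Suc m. of_nat j * c j * z^(j - 1))
      = (\<Sum>j<Suc m. of_nat m * (c j * z^j) - of_nat j * c j * z^j)"
    unfolding z_times by (simp only: sum_subtractf sum_distrib_left)
  also have "\<dots> = (\<Sum>j<Suc m. (of_nat m - of_nat j) * c j * z^j)"
    by (rule sum.cong) (simp_all add: algebra_simps)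
  also have "\<dots> = (\<Sum>j<m. (of_nat m - of_nat j) * c j * z^j)"
    by simp
  finally have lower: "of_nat m * (\<Sum>j<Suc m. c j * z^j) - z * (\<Sum>j<Suc m. of_nat j * c j * z^(j - 1))
      = (\<Sum>j<m. (of_nat m - of_nat j) * c j * z^j)" .
  have "polar_derivative m (coeff_poly c (Suc m)) \<xi> z
      = (of_nat m * (\<Sum>j<Suc m. c j * z^j) - z * (\<Sum>j<Suc m. of_nat j * c j * z^(j - 1)))
        + \<xi> * (\<Sum>j<Suc m. of_nat j * c j * z^(j - 1))"
    unfolding polar_derivative_def poly_coeff_poly poly_pderiv_coeff_poly by (simp add: algebra_simps)
  also have "\<dots> = (\<Sum>j<m. (of_nat m - of_nat j) * c j * z^j) + (\<Sum>j<m. \<xi> * of_nat (j + 1) * c (j + 1) * z^j)"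
    unfolding lower unfolding shift by (simp add: sum_distrib_left mult.assoc)
  also have "\<dots> = (\<Sum>j<m. ((of_nat m - of_nat j) * c j + \<xi> * of_nat (j + 1) * c (j + 1)) * z^j)"
    by (simp add: sum.distrib[symmetric] algebra_simps)
  finally show ?thesis .
qed

definition Q_coeff :: "(nat \<Rightarrow> complex) \<Rightarrow> nat \<Rightarrow> complex" where
  "Q_coeff y j = (if j = 0 then 1 else (-1)^j * y j)"

definition P_coeff :: "(nat \<Rightarrow> complex) \<Rightarrow> nat \<Rightarrow> complex" where
  "P_coeff x j = (-1)^j * x (j + 1)"

definition pencil_coeff :: "(nat \<Rightarrow> complex) \<Rightarrow> (nat \<Rightarrow> complex) \<Rightarrow> complex \<Rightarrow> nat \<Rightarrow> complex" where
  "pencil_coeff x y w j = Q_coeff y j - w * P_coeff x j"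

definition pencil_poly :: "nat \<Rightarrow> (nat \<Rightarrow> complex) \<Rightarrow> (nat \<Rightarrow> complex) \<Rightarrow> complex \<Rightarrow> complex poly" where
  "pencil_poly N x y w = coeff_poly (pencil_coeff x y w) N"

lemma poly_pencil_poly:
  assumes "1 \<le> N"
  shows "poly (pencil_poly N x y w) z = QN N y z - w * PN N x z"
proof -
  have "{..<N} = insert 0 {1..N - 1}" using assms by auto
  then have "(\<Sum>j<N. Q_coeff y j * z^j) = QN N y z"
    unfolding QN_def by (simp add: Q_coeff_def)
  moreover have "(\<Sum>j<N. P_coeff x j * z^j) = PN N x z"
    unfolding PN_def P_coeff_def by (simp add: mult.assoc)
  moreover have "poly (pencil_poly N x y w) z = (\<Sum>j<N. Q_coeff y j * z^j) - w * (\<Sum>j<N. P_coeff x j * z^j)"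
    unfolding pencil_poly_def poly_coeff_poly pencil_coeff_def
    by (simp only: left_diff_distrib mult.assoc sum_subtractf sum_distrib_left)
  ultimately show ?thesis by simp
qed

lemma reduced_pencil_coeff:
  assumes den: "(of_nat n - 1) - \<xi> * y 1 \<noteq> 0" and n: "2 \<le> n"
  shows "(of_nat (n - 1) - of_nat j) * pencil_coeff x y w j
           + \<xi> * of_nat (j + 1) * pencil_coeff x y w (j + 1)
         = ((of_nat n - 1) - \<xi> * y 1) * pencil_coeff (xtil n x y \<xi>) (ytil n y \<xi>) w j"
proof -
  define D where "D = (of_nat n - 1) - \<xi> * y 1"
  have n1: "(of_nat (n - 1) :: complex) = of_nat n - 1" using n by (simp add: of_nat_diff)
  have y_red: "D * ytil n y \<xi> j = (of_nat n - 1 - of_nat j) * y j - (of_nat j + 1) * \<xi> * y (j + 1)"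
    unfolding ytil_def D_def[symmetric] using den D_def by simp
  have x_red: "D * xtil n x y \<xi> (j + 1)
      = (of_nat n - of_nat (j + 1)) * x (j + 1) - of_nat (j + 1) * \<xi> * x (j + 2)"
    unfolding xtil_def D_def[symmetric] using den D_def by simp
  have "D * pencil_coeff (xtil n x y \<xi>) (ytil n y \<xi>) w j
      = (if j = 0 then D else (-1)^j * (D * ytil n y \<xi> j)) - w * ((-1)^j * (D * xtil n x y \<xi> (j + 1)))"
    unfolding pencil_coeff_def Q_coeff_def P_coeff_def by (simp add: algebra_simps)
  then show ?thesis
    unfolding D_def[symmetric] x_red y_red pencil_coeff_def Q_coeff_def P_coeff_def n1
    by (cases "j = 0") (simp_all add: D_def algebra_simps)
qed

lemma polar_derivative_pencil_reduction:
  assumes den: "(of_nat n - 1) - \<xi> * y 1 \<noteq> 0" and n: "2 \<le> n"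
  shows "polar_derivative (n - 1) (pencil_poly n x y w) \<xi> z
         = ((of_nat n - 1) - \<xi> * y 1) * (QN (n - 1) (ytil n y \<xi>) z - w * PN (n - 1) (xtil n x y \<xi>) z)"
proof -
  obtain m where m: "n = Suc m" using n by (cases n) auto
  have "polar_derivative (n - 1) (pencil_poly n x y w) \<xi> z
      = (\<Sum>j<m. ((of_nat n - 1) - \<xi> * y 1) * pencil_coeff (xtil n x y \<xi>) (ytil n y \<xi>) w j * z^j)"
    unfolding pencil_poly_def m diff_Suc_1 polar_derivative_coeff_poly
    using reduced_pencil_coeff[where n = n and x = x and y = y and \<xi> = \<xi> and w = w, OF den n] m by simp
  also have "\<dots> = ((of_nat n - 1) - \<xi> * y 1) * poly (pencil_poly (n - 1) (xtil n x y \<xi>) (ytil n y \<xi>) w) z"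
    unfolding pencil_poly_def poly_coeff_poly m by (simp add: sum_distrib_left mult.assoc)
  finally show ?thesis
    using n by (simp add: poly_pencil_poly)
qed

lemma polar_derivative_pencil_at_origin:
  assumes "2 \<le> n"
  shows "polar_derivative (n - 1) (pencil_poly n x y 0) \<xi> 0 = (of_nat n - 1) - \<xi> * y 1"
proof -
  obtain m where m: "n = Suc (Suc m)" using assms by (metis add_2_eq_Suc le_Suc_ex)
  have "polar_derivative (n - 1) (pencil_poly n x y 0) \<xi> 0
      = of_nat (Suc m) * pencil_coeff x y 0 0 + \<xi> * pencil_coeff x y 0 1"
    unfolding pencil_poly_def m diff_Suc_1 polar_derivative_coeff_poly
    by (subst sum.lessThan_Suc_shift) simp
  then show ?thesis unfolding m pencil_coeff_def Q_coeff_def by simp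
qed

lemma polar_derivative_pencil_nonzero:
  assumes G: "(x, y) \<in> G1 n" and n: "2 \<le> n"
    and w: "cmod w \<le> 1" and z: "cmod z \<le> 1" and \<xi>: "cmod \<xi> \<le> 1"
  shows "polar_derivative (n - 1) (pencil_poly n x y w) \<xi> z \<noteq> 0"
proof (rule polar_derivative_nonzero[OF _ _ z \<xi>])
  have zero_free: "poly (pencil_poly n x y w) a \<noteq> 0" if "cmod a \<le> 1" for a
    using G w that n unfolding G1_def by (simp add: poly_pencil_poly)
  then show "pencil_poly n x y w \<noteq> 0" using zero_free[of 0] by force
  show "\<forall>a. poly (pencil_poly n x y w) a = 0 \<longrightarrow> 1 < cmod a"
    using zero_free not_less by blast
  show "degree (pencil_poly n x y w) \<le> n - 1"
    unfolding pencil_poly_def by (rule degree_coeff_poly)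
  show "0 < n - 1" using n by simp
qed

theorem theorem3p4:
  fixes n :: nat and x y :: "nat \<Rightarrow> complex"
  assumes "n \<ge> 3"
  shows "(x, y) \<in> G1 n \<longleftrightarrow>
         (\<forall>\<xi>. cmod \<xi> \<le> 1 \<longrightarrow>
            (of_nat n - 1) - \<xi> * y 1 \<noteq> 0 \<and>
            (xtil n x y \<xi>, ytil n y \<xi>) \<in> G1 (n - 1))"
proof -
  have n: "2 \<le> n" using assms by simp
  show ?thesis
  proof
    assume G: "(x, y) \<in> G1 n"
    show "\<forall>\<xi>. cmod \<xi> \<le> 1 \<longrightarrow> (of_nat n - 1) - \<xi> * y 1 \<noteq> 0 \<and>
                 (xtil n x y \<xi>, ytil n y \<xi>) \<in> G1 (n - 1)"
    proof (intro allI impI conjI)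
      fix \<xi> :: complex assume \<xi>: "cmod \<xi> \<le> 1"
      show den: "(of_nat n - 1) - \<xi> * y 1 \<noteq> 0"
        using polar_derivative_pencil_nonzero[OF G n _ _ \<xi>, of 0 0]
        unfolding polar_derivative_pencil_at_origin[OF n] by simp
      show "(xtil n x y \<xi>, ytil n y \<xi>) \<in> G1 (n - 1)"
        using polar_derivative_pencil_nonzero[OF G n _ _ \<xi>]
        unfolding G1_def polar_derivative_pencil_reduction[where y = y and \<xi> = \<xi>, OF den n] by simp
    qed
  next
    assume H: "\<forall>\<xi>. cmod \<xi> \<le> 1 \<longrightarrow> (of_nat n - 1) - \<xi> * y 1 \<noteq> 0 \<and>
                     (xtil n x y \<xi>, ytil n y \<xi>) \<in> G1 (n - 1)"
    show "(x, y) \<in> G1 n"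
      unfolding G1_def
    proof clarsimp
      fix z w :: complex
      assume z: "cmod z \<le> 1" and w: "cmod w \<le> 1" and vanish: "QN n y z = w * PN n x z"
      have den: "(of_nat n - 1) - z * y 1 \<noteq> 0" and red: "(xtil n x y z, ytil n y z) \<in> G1 (n - 1)"
        using H z by auto
      (* At xi = z the polar derivative reduces to (n-1) F_w(z) = 0. *)
      have "polar_derivative (n - 1) (pencil_poly n x y w) z z = 0"
        using vanish n by (simp add: polar_derivative_def poly_pencil_poly)
      moreover have "polar_derivative (n - 1) (pencil_poly n x y w) z z \<noteq> 0"
        using red z w den unfolding polar_derivative_pencil_reduction[where y = y and \<xi> = z, OF den n] G1_def
        by simp
      ultimately show False by simp
    qed
  qed
qed

end
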